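(* Let $f\colon X\to Y$ be a perfect map between metrizable spaces, $d$ a compatible metric on $X$, and $(M,\varrho)$ a complete metric space. Let $m,n\ge1$, $y\in Y$, and $g\in\mathcal{K}(m,n,y)$. Then there exist a neighborhood $V_y$ of $y$ in $Y$ and $\delta_y>0$ such that whenever $y'\in V_y$ and $g_1\in C(X,M)$ satisfies $\varrho(g_1(x),g(x))<\delta_y$ for all $x\in f^{-1}(y')$, we have $g_1\in\mathcal{K}(m,n,y')$.
   Context: For $A\subset X$ and $\delta>0$, $B(A,\delta)=\{x\in X:d(x,A)<\delta\}$. For $g\in C(X,M)$, $y\in Y$, $x\in f^{-1}(y)$, $C(x,g|f^{-1}(y))$ is the component of $g^{-1}(g(x))\cap f^{-1}(y)$ containing $x$. $\mathcal{K}(m,n,y)$ is the set of all $g\in C(X,M)$ such that for every subcontinuum $L\subset f^{-1}(y)$ with $\operatorname{diam} g(L)\ge1/n$ there is $x\in L$ with $C(x,g|f^{-1}(y))\subset B(L,1/m)$. *)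

theory Defs
  imports "HOL-Analysis.Analysis"
begin

definition perfect_map :: "('a::metric_space \<Rightarrow> 'b::metric_space) \<Rightarrow> bool" where
  "perfect_map f \<longleftrightarrow> continuous_on UNIV f \<and> (\<forall>S. closed S \<longrightarrow> closed (f ` S))
     \<and> (\<forall>y. compact (f -` {y}))"

definition nbhd_set :: "'a::metric_space set \<Rightarrow> real \<Rightarrow> 'a set" where
  "nbhd_set A \<delta> = {x. infdist x A < \<delta>}"

definition fib_comp :: "('a \<Rightarrow> 'c) \<Rightarrow> ('a \<Rightarrow> 'b) \<Rightarrow> 'b \<Rightarrow> 'a::topological_space \<Rightarrow> 'a set" where
  "fib_comp g f y x = connected_component_set (g -` {g x} \<inter> f -` {y}) x"

definition K_class :: "('a::metric_space \<Rightarrow> 'b) \<Rightarrow> nat \<Rightarrow> nat \<Rightarrow> 'b \<Rightarrow> ('a \<Rightarrow> 'c::metric_space) set" where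
  "K_class f m n y = {g. continuous_on UNIV g \<and>
     (\<forall>L. L \<subseteq> f -` {y} \<and> L \<noteq> {} \<and> compact L \<and> connected L \<and> diameter (g ` L) \<ge> 1 / real n
        \<longrightarrow> (\<exists>x\<in>L. fib_comp g f y x \<subseteq> nbhd_set L (1 / real m)))}"

end

theory Submission
  imports Defs "HOL-Complex_Analysis.Great_Picard"
begin

text \<open>
  If the claim failed, there would be points \<open>y\<^sub>k \<rightarrow> y\<close>, maps \<open>G\<^sub>k\<close> uniformly
  \<open>1/k\<close>-close to \<open>g\<close> on \<open>f\<^sup>-\<^sup>1(y\<^sub>k)\<close> with \<open>G\<^sub>k \<notin> \<K>(m,n,y\<^sub>k)\<close>, and continua
  \<open>\<Lambda>\<^sub>k \<subseteq> f\<^sup>-\<^sup>1(y\<^sub>k)\<close> witnessing this. Since \<open>f\<close> is perfect they all lie in the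
  compact set \<open>f\<^sup>-\<^sup>1({y} \<union> {y\<^sub>k})\<close>, so by Blaschke's selection theorem a subsequence
  converges in the Hausdorff sense to a continuum \<open>L \<subseteq> f\<^sup>-\<^sup>1(y)\<close> with
  \<open>diam g(L) \<ge> 1/n\<close>. As \<open>g \<in> \<K>(m,n,y)\<close>, some \<open>x \<in> L\<close> has its component
  \<open>C(x, g|f\<^sup>-\<^sup>1(y))\<close> inside \<open>B(L, 1/m - \<eta>)\<close>. That component is a clopen piece of
  its compact level set. Disjoint open neighbourhoods of this piece and of the rest of the
  level set eventually cover the level sets of \<open>G\<^sub>k\<close> through points \<open>x\<^sub>k \<in> \<Lambda>\<^sub>k\<close>
  converging to \<open>x\<close>, so by connectedness the components of the \<open>x\<^sub>k\<close> stay in the first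
  neighbourhood. Hence for large \<open>k\<close> they lie in \<open>B(\<Lambda>\<^sub>k, 1/m)\<close>, contradicting the
  choice of \<open>\<Lambda>\<^sub>k\<close>.
\<close>

section \<open>Metric neighbourhoods and compactness\<close>

lemma infdist_lessE:
  assumes "infdist x A < e" "A \<noteq> {}"
  obtains a where "a \<in> A" "dist x a < e"
proof -
  have "Inf (dist x ` A) < e" using assms by (simp add: infdist_notempty)
  then show thesis using cInf_lessD[of "dist x ` A" e] assms(2) that by auto
qed

lemma open_nbhd_set: "open (nbhd_set A e)"
  unfolding nbhd_set_def by (intro open_Collect_less continuous_intros)

lemma nbhd_set_mono: "d \<le> e \<Longrightarrow> nbhd_set A d \<subseteq> nbhd_set A e"
  by (auto simp: nbhd_set_def)

lemma nbhd_set_trans: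
  assumes "A \<subseteq> nbhd_set B e" "A \<noteq> {}"
  shows "nbhd_set A d \<subseteq> nbhd_set B (d + e)"
proof
  fix x assume "x \<in> nbhd_set A d"
  then obtain a where a: "a \<in> A" "dist x a < d"
    using assms(2) infdist_lessE unfolding nbhd_set_def by blast
  have "infdist x B \<le> infdist a B + dist x a" by (rule infdist_triangle)
  then show "x \<in> nbhd_set B (d + e)" using a assms(1) by (auto simp: nbhd_set_def)
qed

lemma nbhd_set_Int_nonempty_sym:
  assumes "A \<inter> nbhd_set B e \<noteq> {}" "B \<noteq> {}"
  shows "B \<inter> nbhd_set A e \<noteq> {}"
proof -
  obtain a where a: "a \<in> A" "infdist a B < e" using assms(1) by (auto simp: nbhd_set_def)
  obtain b where "b \<in> B" "dist a b < e" using infdist_lessE[OF a(2) assms(2)] by metis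
  moreover have "infdist b A \<le> dist b a" using a(1) by (rule infdist_le)
  ultimately show ?thesis by (auto simp: nbhd_set_def dist_commute)
qed

lemma compact_nbhd_set_subset_open:
  assumes "compact A" "A \<noteq> {}" "open U" "A \<subseteq> U"
  obtains e where "e > 0" "nbhd_set A e \<subseteq> U"
proof -
  obtain e where e: "e > 0" "(\<Union>x\<in>A. ball x e) \<subseteq> U"
    by (rule compact_subset_open_imp_ball_epsilon_subset[OF assms(1,3,4)])
  have "nbhd_set A e \<subseteq> (\<Union>x\<in>A. ball x e)"
  proof
    fix x assume "x \<in> nbhd_set A e"
    then obtain a where "a \<in> A" "dist x a < e"
      using assms(2) infdist_lessE unfolding nbhd_set_def by blast
    then show "x \<in> (\<Union>x\<in>A. ball x e)" by (auto simp: dist_commute)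
  qed
  then show thesis using that e by (meson order_trans)
qed

lemma compact_subset_nbhd_set_margin:
  assumes "compact C" "C \<subseteq> nbhd_set A e"
  obtains \<eta> where "\<eta> > 0" "C \<subseteq> nbhd_set A (e - \<eta>)"
proof (cases "C = {}")
  case True
  then have "C \<subseteq> nbhd_set A (e - 1)" by simp
  then show thesis by (rule that[rotated]) simp
next
  case False
  have "continuous_on C (\<lambda>w. infdist w A)" by (intro continuous_intros)
  then obtain u where u: "u \<in> C" "\<And>w. w \<in> C \<Longrightarrow> infdist w A \<le> infdist u A"
    using continuous_attains_sup[OF assms(1) False] by metis
  have "infdist u A < e" using u(1) assms(2) by (auto simp: nbhd_set_def)
  have "C \<subseteq> nbhd_set A (e - (e - infdist u A) / 2)"
  proof
    fix w assume "w \<in> C"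
    then have "infdist w A \<le> infdist u A" by (rule u(2))
    then show "w \<in> nbhd_set A (e - (e - infdist u A) / 2)"
      using \<open>infdist u A < e\<close> unfolding nbhd_set_def by (simp add: field_simps)
  qed
  moreover have "(e - infdist u A) / 2 > 0" using \<open>infdist u A < e\<close> by simp
  ultimately show thesis by (rule that[rotated])
qed

lemma compact_sublevel_set_subset_open:
  fixes h :: "'a::topological_space \<Rightarrow> real"
  assumes "compact S" "continuous_on S h" "open U" "{w \<in> S. h w \<le> 0} \<subseteq> U"
  obtains \<theta> where "\<theta> > 0" "{w \<in> S. h w < \<theta>} \<subseteq> U"
proof (cases "S - U = {}")
  case True
  then have "{w \<in> S. h w < 1} \<subseteq> U" by auto
  then show thesis by (rule that[rotated]) simp
next
  case False
  have "compact (S - U)" using assms(1,3) by (rule compact_diff)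
  moreover have "continuous_on (S - U) h" using assms(2) by (rule continuous_on_subset) auto
  ultimately obtain t where t: "t \<in> S - U" "\<And>w. w \<in> S - U \<Longrightarrow> h t \<le> h w"
    using continuous_attains_inf False by metis
  have "h t > 0" using t(1) assms(4) by force
  moreover have "{w \<in> S. h w < h t} \<subseteq> U" using t(2) by force
  ultimately show thesis by (rule that)
qed

lemma compact_convergent_sequence_range:
  fixes l :: "'a::topological_space"
  assumes "f \<longlonglongrightarrow> l"
  shows "compact (insert l (range f))"
  using compactin_sequence_with_limit[of euclidean f l "range f"] assms by simp

lemma perfect_map_compact_vimage:
  assumes "perfect_map f" "compact K"
  shows "compact (f -` K)"
proof -
  have "closed_map euclidean euclidean f"
    using assms(1) by (simp add: perfect_map_def closed_map_def)
  moreover have "compactin euclidean {x \<in> topspace euclidean. f x = y}" for y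
    using assms(1) by (simp add: perfect_map_def vimage_def)
  ultimately have "proper_map euclidean euclidean f" by (simp add: proper_map_def)
  then have "compactin euclidean {x. x \<in> topspace euclidean \<and> f x \<in> K}"
    using assms(2) compactin_proper_map_preimage compactin_euclidean_iff by blast
  then show ?thesis by (simp add: vimage_def)
qed

section \<open>Hausdorff convergence\<close>

definition Hausdorff_lim :: "(nat \<Rightarrow> 'a::metric_space set) \<Rightarrow> 'a set \<Rightarrow> bool" where
  "Hausdorff_lim \<Lambda> L \<longleftrightarrow>
     (\<forall>e>0. \<forall>\<^sub>F k in sequentially. \<Lambda> k \<subseteq> nbhd_set L e \<and> L \<subseteq> nbhd_set (\<Lambda> k) e)"

lemma Hausdorff_limD:
  "Hausdorff_lim \<Lambda> L \<Longrightarrow> e > 0 \<Longrightarrow>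
     \<forall>\<^sub>F k in sequentially. \<Lambda> k \<subseteq> nbhd_set L e \<and> L \<subseteq> nbhd_set (\<Lambda> k) e"
  by (simp add: Hausdorff_lim_def)

lemma compact_finite_nets:
  fixes S :: "'a::metric_space set"
  assumes "compact S"
  obtains T where "\<And>j. finite (T j)" "\<And>j. T j \<subseteq> S" "\<And>j. S \<subseteq> (\<Union>c\<in>T j. ball c (1 / real (Suc j)))"
proof -
  have "\<exists>T. finite T \<and> T \<subseteq> S \<and> S \<subseteq> (\<Union>c\<in>T. ball c (1 / real (Suc j)))" for j
  proof -
    have "1 / real (Suc j) > 0" by simp
    then show ?thesis
      using seq_compact_imp_totally_bounded[OF compact_imp_seq_compact[OF assms]] by blast
  qed
  then obtain T where "\<And>j. finite (T j)" "\<And>j. T j \<subseteq> S" "\<And>j. S \<subseteq> (\<Union>c\<in>T j. ball c (1 / real (Suc j)))"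
    by metis
  then show thesis by (rule that)
qed

lemma Lipschitz_uniformly_Cauchy:
  fixes \<phi> :: "nat \<Rightarrow> 'a::metric_space \<Rightarrow> real"
  assumes T: "\<And>j. finite (T j)" and net: "\<And>j. S \<subseteq> (\<Union>c\<in>T j. ball c (1 / real (Suc j)))"
    and conv: "\<And>j c. c \<in> T j \<Longrightarrow> convergent (\<lambda>k. \<phi> k c)"
    and Lipschitz: "\<And>k v w. \<bar>\<phi> k v - \<phi> k w\<bar> \<le> dist v w"
  shows "uniformly_Cauchy_on S \<phi>"
proof (rule uniformly_Cauchy_onI)
  fix e :: real assume "e > 0"
  then have "e / 3 > 0" by simp
  then obtain j where j: "1 / real (Suc j) < e / 3" by (rule nat_approx_posE)
  have "\<forall>c\<in>T j. \<forall>\<^sub>F M in sequentially. \<forall>k\<ge>M. \<forall>k'\<ge>M. dist (\<phi> k c) (\<phi> k' c) < e / 3"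
  proof
    fix c assume "c \<in> T j"
    then have "Cauchy (\<lambda>k. \<phi> k c)" using conv convergent_Cauchy by blast
    then obtain M where "\<forall>k\<ge>M. \<forall>k'\<ge>M. dist (\<phi> k c) (\<phi> k' c) < e / 3"
      using metric_CauchyD[of _ "e / 3"] \<open>e > 0\<close> by fastforce
    then show "\<forall>\<^sub>F M in sequentially. \<forall>k\<ge>M. \<forall>k'\<ge>M. dist (\<phi> k c) (\<phi> k' c) < e / 3"
      unfolding eventually_sequentially by (meson order_trans)
  qed
  then have "\<forall>\<^sub>F M in sequentially. \<forall>c\<in>T j. \<forall>k\<ge>M. \<forall>k'\<ge>M. dist (\<phi> k c) (\<phi> k' c) < e / 3"
    by (rule eventually_ball_finite[OF T])
  then obtain M where M: "\<forall>c\<in>T j. \<forall>k\<ge>M. \<forall>k'\<ge>M. dist (\<phi> k c) (\<phi> k' c) < e / 3"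
    using eventually_happens'[OF sequentially_bot] by blast
  show "\<exists>M. \<forall>w\<in>S. \<forall>k\<ge>M. \<forall>k'\<ge>M. dist (\<phi> k w) (\<phi> k' w) < e"
  proof (intro exI ballI allI impI)
    fix w k k' assume "w \<in> S" "M \<le> k" "M \<le> k'"
    then obtain c where "c \<in> T j" "dist c w < 1 / real (Suc j)" using net[of j] by auto
    then have "dist (\<phi> k c) (\<phi> k' c) < e / 3" "dist w c < e / 3"
      using M \<open>M \<le> k\<close> \<open>M \<le> k'\<close> j by (auto simp: dist_commute)
    moreover have "\<bar>\<phi> k w - \<phi> k c\<bar> \<le> dist w c" "\<bar>\<phi> k' w - \<phi> k' c\<bar> \<le> dist w c"
      by (rule Lipschitz)+
    ultimately show "dist (\<phi> k w) (\<phi> k' w) < e"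
      unfolding dist_real_def by arith
  qed
qed

lemma Lipschitz_uniformly_convergent_subseq:
  fixes \<phi> :: "nat \<Rightarrow> 'a::metric_space \<Rightarrow> real"
  assumes S: "compact S"
    and bounded: "\<And>k w. w \<in> S \<Longrightarrow> \<bar>\<phi> k w\<bar> \<le> B"
    and Lipschitz: "\<And>k v w. \<bar>\<phi> k v - \<phi> k w\<bar> \<le> dist v w"
  obtains r \<psi> where "strict_mono r" "uniform_limit S (\<lambda>k. \<phi> (r k)) \<psi> sequentially"
proof -
  obtain T where T: "\<And>j. finite (T j)" "\<And>j. T j \<subseteq> S"
    and net: "\<And>j. S \<subseteq> (\<Union>c\<in>T j. ball c (1 / real (Suc j)))"
    using compact_finite_nets[OF S] by metis
  have "countable (\<Union>j. T j)" using T(1) by (simp add: countable_finite)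
  moreover have "norm (\<phi> k c) \<le> B" if "c \<in> (\<Union>j. T j)" for k c
    using bounded T(2) that by auto
  ultimately obtain r where r: "strict_mono r"
    and conv: "\<And>c. c \<in> (\<Union>j. T j) \<Longrightarrow> \<exists>l. (\<lambda>k. \<phi> (r k) c) \<longlonglongrightarrow> l"
    using function_convergent_subsequence[of "\<Union>j. T j" \<phi> B] by metis
  have "uniformly_Cauchy_on S (\<lambda>k. \<phi> (r k))"
    using T(1) net
  proof (rule Lipschitz_uniformly_Cauchy)
    show "convergent (\<lambda>k. \<phi> (r k) c)" if "c \<in> T j" for j c
      using conv that unfolding convergent_def by blast
  qed (rule Lipschitz)
  then obtain \<psi> where "uniform_limit S (\<lambda>k. \<phi> (r k)) \<psi> sequentially"
    by (metis Cauchy_uniformly_convergent uniformly_convergent_on_def)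
  with r show thesis by (rule that)
qed

lemma uniform_limit_infdist_continuous_nonneg:
  assumes "uniform_limit S (\<lambda>k w. infdist w (\<Lambda> k)) \<psi> sequentially"
  shows "continuous_on S \<psi>" and "w \<in> S \<Longrightarrow> \<psi> w \<ge> 0"
proof -
  show "continuous_on S \<psi>"
    by (rule uniform_limit_theorem[OF _ assms]) (auto intro!: always_eventually continuous_intros)
  show "\<psi> w \<ge> 0" if "w \<in> S"
    using tendsto_uniform_limitI[OF assms that]
    by (rule tendsto_lowerbound) (simp_all add: infdist_nonneg)
qed

lemma uniform_limit_infdist_zero_set_nonempty:
  assumes S: "compact S" and sub: "\<And>k. \<Lambda> k \<subseteq> S" and ne: "\<And>k. \<Lambda> k \<noteq> {}"
    and lim: "uniform_limit S (\<lambda>k w. infdist w (\<Lambda> k)) \<psi> sequentially"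
  shows "{w \<in> S. \<psi> w = 0} \<noteq> {}"
proof -
  note cont = uniform_limit_infdist_continuous_nonneg(1)[OF lim]
    and nonneg = uniform_limit_infdist_continuous_nonneg(2)[OF lim]
  have "S \<noteq> {}" using sub ne by blast
  then obtain w0 where w0: "w0 \<in> S" "\<And>w. w \<in> S \<Longrightarrow> \<psi> w0 \<le> \<psi> w"
    using continuous_attains_inf[OF S _ cont] by metis
  have "\<psi> w0 = 0"
  proof (rule ccontr)
    assume "\<psi> w0 \<noteq> 0"
    then have "\<psi> w0 > 0" using nonneg[OF w0(1)] by simp
    then have "\<forall>\<^sub>F k in sequentially. \<forall>w\<in>S. dist (infdist w (\<Lambda> k)) (\<psi> w) < \<psi> w0"
      by (rule uniform_limitD[OF lim])
    then have "\<exists>k. \<forall>w\<in>S. dist (infdist w (\<Lambda> k)) (\<psi> w) < \<psi> w0"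
      using eventually_happens'[OF sequentially_bot] by blast
    then obtain k where k: "\<forall>w\<in>S. dist (infdist w (\<Lambda> k)) (\<psi> w) < \<psi> w0" ..
    obtain a where "a \<in> \<Lambda> k" using ne by blast
    then have "a \<in> S" "infdist a (\<Lambda> k) = 0" using sub by auto
    then have "\<psi> a < \<psi> w0" using k by (fastforce simp: dist_real_def)
    then show False using w0(2)[OF \<open>a \<in> S\<close>] by simp
  qed
  then show ?thesis using w0(1) by blast
qed

lemma uniform_limit_infdist_Hausdorff_lim:
  assumes S: "compact S" and sub: "\<And>k. \<Lambda> k \<subseteq> S"
    and lim: "uniform_limit S (\<lambda>k w. infdist w (\<Lambda> k)) \<psi> sequentially"
  defines "L \<equiv> {w \<in> S. \<psi> w = 0}"
  shows "compact L" "Hausdorff_lim \<Lambda> L"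
proof -
  note cont = uniform_limit_infdist_continuous_nonneg(1)[OF lim]
    and nonneg = uniform_limit_infdist_continuous_nonneg(2)[OF lim]
  have "closed L"
    unfolding L_def using continuous_closed_preimage_constant[OF cont compact_imp_closed[OF S]] .
  moreover have "L = S \<inter> L" by (auto simp: L_def)
  ultimately show "compact L" using compact_Int_closed[OF S] by metis
  show "Hausdorff_lim \<Lambda> L"
    unfolding Hausdorff_lim_def
  proof (intro allI impI)
    fix e :: real assume "e > 0"
    have "{w \<in> S. \<psi> w \<le> 0} \<subseteq> nbhd_set L e"
      using nonneg \<open>e > 0\<close> by (force simp: L_def nbhd_set_def)
    then obtain \<theta> where \<theta>: "\<theta> > 0" "{w \<in> S. \<psi> w < \<theta>} \<subseteq> nbhd_set L e"
      using compact_sublevel_set_subset_open[OF S cont open_nbhd_set] by metis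
    have "\<forall>\<^sub>F k in sequentially. \<forall>w\<in>S. dist (infdist w (\<Lambda> k)) (\<psi> w) < min e \<theta>"
      by (rule uniform_limitD[OF lim]) (use \<open>e > 0\<close> \<theta>(1) in simp)
    then show "\<forall>\<^sub>F k in sequentially. \<Lambda> k \<subseteq> nbhd_set L e \<and> L \<subseteq> nbhd_set (\<Lambda> k) e"
    proof eventually_elim
      case (elim k)
      have "\<Lambda> k \<subseteq> nbhd_set L e"
      proof
        fix w assume "w \<in> \<Lambda> k"
        then have "w \<in> S" "infdist w (\<Lambda> k) = 0" using sub by auto
        then have "\<psi> w < \<theta>" using elim by (fastforce simp: dist_real_def)
        then show "w \<in> nbhd_set L e" using \<theta>(2) \<open>w \<in> S\<close> by blast
      qed
      moreover have "L \<subseteq> nbhd_set (\<Lambda> k) e"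
        using elim by (force simp: L_def nbhd_set_def dist_real_def)
      ultimately show ?case ..
    qed
  qed
qed

text \<open>The distance functions to the \<open>\<Lambda> k\<close> are
  1-Lipschitz, so a subsequence converges uniformly on \<open>S\<close>; the limit set is the zero set
  of the limit function.\<close>

lemma compact_Hausdorff_convergent_subseq:
  fixes \<Lambda> :: "nat \<Rightarrow> 'a::metric_space set"
  assumes S: "compact S" and sub: "\<And>k. \<Lambda> k \<subseteq> S" and ne: "\<And>k. \<Lambda> k \<noteq> {}"
  obtains r L where "strict_mono r" "compact L" "L \<noteq> {}" "Hausdorff_lim (\<lambda>k. \<Lambda> (r k)) L"
proof -
  have "\<bar>infdist w (\<Lambda> k)\<bar> \<le> diameter S" if "w \<in> S" for k w
  proof -
    obtain a where "a \<in> \<Lambda> k" using ne by blast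
    then have "infdist w (\<Lambda> k) \<le> dist w a" by (rule infdist_le)
    also have "\<dots> \<le> diameter S"
      using diameter_bounded_bound[OF compact_imp_bounded[OF S] that] \<open>a \<in> \<Lambda> k\<close> sub by blast
    finally show ?thesis by (simp add: infdist_nonneg)
  qed
  then obtain r \<psi> where r: "strict_mono r"
    and lim: "uniform_limit S (\<lambda>k w. infdist w (\<Lambda> (r k))) \<psi> sequentially"
    using Lipschitz_uniformly_convergent_subseq[OF S, of "\<lambda>k w. infdist w (\<Lambda> k)"] infdist_triangle_abs
    by metis
  have "compact {w \<in> S. \<psi> w = 0}" "Hausdorff_lim (\<lambda>k. \<Lambda> (r k)) {w \<in> S. \<psi> w = 0}"
    using uniform_limit_infdist_Hausdorff_lim[OF S _ lim] sub by simp_all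
  moreover have "{w \<in> S. \<psi> w = 0} \<noteq> {}"
    using uniform_limit_infdist_zero_set_nonempty[OF S _ _ lim] sub ne by simp
  ultimately show thesis using r that by simp
qed

lemma Hausdorff_lim_approximating_sequence:
  assumes lim: "Hausdorff_lim \<Lambda> L" and ne: "\<And>k. \<Lambda> k \<noteq> {}" and "w \<in> L"
  obtains p where "\<And>k. p k \<in> \<Lambda> k" "p \<longlonglongrightarrow> w"
proof -
  have "\<exists>p\<in>\<Lambda> k. dist w p < infdist w (\<Lambda> k) + inverse (real (Suc k))" for k
    using infdist_lessE[of w "\<Lambda> k" "infdist w (\<Lambda> k) + inverse (real (Suc k))"] ne by auto
  then obtain p where p: "\<And>k. p k \<in> \<Lambda> k"
    and close: "\<And>k. dist w (p k) < infdist w (\<Lambda> k) + inverse (real (Suc k))"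
    by metis
  have "p \<longlonglongrightarrow> w"
    unfolding tendsto_iff
  proof (intro allI impI)
    fix e :: real assume "e > 0"
    then have "\<forall>\<^sub>F k in sequentially. L \<subseteq> nbhd_set (\<Lambda> k) (e / 2)"
      using Hausdorff_limD[OF lim, of "e / 2"] by (simp add: eventually_conj_iff)
    moreover have "\<forall>\<^sub>F k in sequentially. inverse (real (Suc k)) < e / 2"
      using tendstoD[OF LIMSEQ_inverse_real_of_nat, of "e / 2"] \<open>e > 0\<close> by simp
    ultimately show "\<forall>\<^sub>F k in sequentially. dist (p k) w < e"
    proof eventually_elim
      case (elim k)
      then have "infdist w (\<Lambda> k) < e / 2" using \<open>w \<in> L\<close> by (auto simp: nbhd_set_def)
      then show ?case using close[of k] elim(2) by (simp add: dist_commute)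
    qed
  qed
  with p show thesis by (rule that)
qed

lemma Hausdorff_lim_connected:
  assumes lim: "Hausdorff_lim \<Lambda> L" and "compact L"
    and con: "\<And>k. connected (\<Lambda> k)" and ne: "\<And>k. \<Lambda> k \<noteq> {}"
  shows "connected L"
proof (rule ccontr)
  assume "\<not> connected L"
  then obtain A B where AB: "closed A" "closed B" "A \<noteq> {}" "B \<noteq> {}" "A \<union> B = L" "A \<inter> B = {}"
    using connected_closed_set[of L] \<open>compact L\<close> compact_imp_closed by metis
  have "compact A" "compact B"
    using compact_Int_closed[OF \<open>compact L\<close> AB(1)] compact_Int_closed[OF \<open>compact L\<close> AB(2)] AB(5)
    by (metis Int_absorb1 Un_upper1 Un_upper2)+
  obtain U V where UV: "open U" "open V" "A \<subseteq> U" "B \<subseteq> V" "U \<inter> V = {}"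
  proof (rule Hausdorff_space_compact_separation[of euclidean A B])
    show "disjnt A B" using AB(6) by (simp add: disjnt_def)
  qed (use \<open>compact A\<close> \<open>compact B\<close> that in \<open>auto simp: disjnt_def\<close>)
  obtain eA where eA: "eA > 0" "nbhd_set A eA \<subseteq> U"
    using compact_nbhd_set_subset_open[OF \<open>compact A\<close> AB(3) UV(1,3)] by metis
  obtain eB where eB: "eB > 0" "nbhd_set B eB \<subseteq> V"
    using compact_nbhd_set_subset_open[OF \<open>compact B\<close> AB(4) UV(2,4)] by metis
  define e where "e = min eA eB"
  have e: "e > 0" "nbhd_set A e \<subseteq> U" "nbhd_set B e \<subseteq> V"
    using eA eB nbhd_set_mono[of e eA A] nbhd_set_mono[of e eB B] by (auto simp: e_def)
  obtain k where k: "\<Lambda> k \<subseteq> nbhd_set L e" "L \<subseteq> nbhd_set (\<Lambda> k) e"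
    using Hausdorff_limD[OF lim e(1)] unfolding eventually_sequentially by (metis order_refl)
  have "infdist x L = min (infdist x A) (infdist x B)" for x
    using infdist_Un_min[OF AB(3,4)] AB(5) by simp
  then have "nbhd_set L e = nbhd_set A e \<union> nbhd_set B e" by (auto simp: nbhd_set_def)
  then have "\<Lambda> k \<subseteq> U \<union> V" using k(1) e(2,3) by blast
  moreover have "\<Lambda> k \<inter> U \<noteq> {}"
    using nbhd_set_Int_nonempty_sym[of A "\<Lambda> k" e] k(2) AB(3,5) ne e(2) by blast
  moreover have "\<Lambda> k \<inter> V \<noteq> {}"
    using nbhd_set_Int_nonempty_sym[of B "\<Lambda> k" e] k(2) AB(4,5) ne e(3) by blast
  ultimately show False using connectedD[OF con[of k] UV(1,2)] UV(5) by blast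
qed

lemma Hausdorff_lim_subset_fibre:
  fixes f :: "'a::metric_space \<Rightarrow> 'b::metric_space"
  assumes f: "continuous_on UNIV f" and ys: "ys \<longlonglongrightarrow> y"
    and fib: "\<And>k. \<Lambda> k \<subseteq> f -` {ys k}" and ne: "\<And>k. \<Lambda> k \<noteq> {}" and lim: "Hausdorff_lim \<Lambda> L"
  shows "L \<subseteq> f -` {y}"
proof
  fix w assume "w \<in> L"
  then obtain p where p: "\<And>k. p k \<in> \<Lambda> k" "p \<longlonglongrightarrow> w"
    using Hausdorff_lim_approximating_sequence[OF lim ne \<open>w \<in> L\<close>] by metis
  have "(\<lambda>k. f (p k)) = ys" using p(1) fib by fastforce
  moreover have "(\<lambda>k. f (p k)) \<longlonglongrightarrow> f w"
    using continuous_on_tendsto_compose[OF f p(2)] by simp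
  ultimately have "ys \<longlonglongrightarrow> f w" by simp
  then have "f w = y" using ys by (rule LIMSEQ_unique)
  then show "w \<in> f -` {y}" by simp
qed

lemma diameter_le_approx:
  fixes A B :: "'a::metric_space set"
  assumes "bounded B" "A \<noteq> {}" "\<And>a. a \<in> A \<Longrightarrow> \<exists>b\<in>B. dist a b < e"
  shows "diameter A \<le> diameter B + 2 * e"
proof -
  have "dist a a' \<le> diameter B + 2 * e" if aa: "a \<in> A" "a' \<in> A" for a a'
  proof -
    obtain b b' where b: "b \<in> B" "dist a b < e" "b' \<in> B" "dist a' b' < e"
      using assms(3)[OF aa(1)] assms(3)[OF aa(2)] by blast
    have "dist a a' \<le> dist a b + dist b a'" by (rule dist_triangle)
    moreover have "dist b a' \<le> dist b b' + dist b' a'" by (rule dist_triangle)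
    moreover have "dist b b' \<le> diameter B"
      using diameter_bounded_bound[OF assms(1) b(1,3)] .
    ultimately show ?thesis using b(2,4) by (simp add: dist_commute)
  qed
  then have "(SUP (a, a')\<in>A \<times> A. dist a a') \<le> diameter B + 2 * e"
    using assms(2) by (intro cSUP_least) auto
  then show ?thesis using assms(2) by (simp add: diameter_def)
qed

lemma diameter_image_Hausdorff_lim:
  fixes g :: "'a::metric_space \<Rightarrow> 'c::metric_space"
  assumes S: "compact S" and sub: "\<And>k. \<Lambda> k \<subseteq> S" "L \<subseteq> S" and ne: "\<And>k. \<Lambda> k \<noteq> {}"
    and L: "compact L" "L \<noteq> {}" and g: "continuous_on S g" and lim: "Hausdorff_lim \<Lambda> L"
    and approx: "\<And>e. e > 0 \<Longrightarrow> \<forall>\<^sub>F k in sequentially. \<forall>w\<in>\<Lambda> k. dist (G k w) (g w) < e"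
    and diam: "\<And>k. c \<le> diameter (G k ` \<Lambda> k)"
  shows "c \<le> diameter (g ` L)"
proof (rule field_le_epsilon)
  fix \<tau> :: real assume "\<tau> > 0"
  then have "\<tau> / 4 > 0" by simp
  then obtain d where d: "d > 0" "\<And>v w. v \<in> S \<Longrightarrow> w \<in> S \<Longrightarrow> dist w v < d \<Longrightarrow> dist (g w) (g v) < \<tau> / 4"
    using compact_uniformly_continuous[OF g S] unfolding uniformly_continuous_on_def by metis
  have "\<forall>\<^sub>F k in sequentially. \<Lambda> k \<subseteq> nbhd_set L d \<and> (\<forall>w\<in>\<Lambda> k. dist (G k w) (g w) < \<tau> / 4)"
    using Hausdorff_limD[OF lim d(1)] approx[OF \<open>\<tau> / 4 > 0\<close>] by eventually_elim blast
  then have "\<exists>k. \<Lambda> k \<subseteq> nbhd_set L d \<and> (\<forall>w\<in>\<Lambda> k. dist (G k w) (g w) < \<tau> / 4)"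
    using eventually_happens'[OF sequentially_bot] by blast
  then obtain k where k: "\<Lambda> k \<subseteq> nbhd_set L d" "\<And>w. w \<in> \<Lambda> k \<Longrightarrow> dist (G k w) (g w) < \<tau> / 4"
    by blast
  have "diameter (G k ` \<Lambda> k) \<le> diameter (g ` L) + 2 * (\<tau> / 2)"
  proof (rule diameter_le_approx)
    show "bounded (g ` L)"
      using compact_continuous_image[OF continuous_on_subset[OF g sub(2)] L(1)] by (rule compact_imp_bounded)
    show "G k ` \<Lambda> k \<noteq> {}" using ne by simp
    fix a assume "a \<in> G k ` \<Lambda> k"
    then obtain v where v: "v \<in> \<Lambda> k" "a = G k v" by blast
    then have "infdist v L < d" using k(1) by (auto simp: nbhd_set_def)
    then obtain w where w: "w \<in> L" "dist v w < d" using L(2) by (rule infdist_lessE)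
    have "dist (G k v) (g w) \<le> dist (G k v) (g v) + dist (g v) (g w)" by (rule dist_triangle)
    moreover have "dist (g v) (g w) < \<tau> / 4"
      using d(2)[of w v] w v(1) sub by (auto simp: dist_commute)
    ultimately have "dist a (g w) < \<tau> / 2" using k(2)[OF v(1)] v(2) by simp
    then show "\<exists>b\<in>g ` L. dist a b < \<tau> / 2" using w(1) by blast
  qed
  then show "c \<le> diameter (g ` L) + \<tau>" using diam[of k] by simp
qed

section \<open>Components of level sets in fibres\<close>

lemma compact_connected_component:
  fixes S :: "'a::t2_space set"
  assumes "compact S"
  shows "compact (connected_component_set S x)"
proof -
  have "closed (connected_component_set S x)"
    using assms by (simp add: closed_connected_component compact_imp_closed)
  then show ?thesis
    using compact_Int_closed[OF assms] connected_component_subset[of S x] by (metis inf.absorb2)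
qed

lemma connected_subset_open_Un:
  assumes "connected C" "open U" "open V" "U \<inter> V = {}" "C \<subseteq> U \<union> V" "C \<inter> U \<noteq> {}"
  shows "C \<subseteq> U"
  using connectedD[OF assms(1-3)] assms(4-6) by blast

lemma compact_connected_component_open_separation:
  fixes P :: "'a::metric_space set"
  assumes P: "compact P" and "x \<in> P" and W: "open W" "connected_component_set P x \<subseteq> W"
  obtains O1 O2 where "open O1" "open O2" "O1 \<inter> O2 = {}" "P \<subseteq> O1 \<union> O2" "x \<in> O1" "O1 \<subseteq> W"
proof -
  let ?X = "top_of_set P"
  let ?C = "connected_component_set P x"
  have "connected_component_of_set ?X x = ?C"
    by (auto simp: connected_component_of_def connected_component_def connectedin_subtopology)
  then have C: "?C \<in> connected_components_of ?X"
    using connected_component_in_connected_components_of[of ?X x] \<open>x \<in> P\<close> by simp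
  have cC: "compactin ?X ?C" using compact_connected_component[OF P]
    by (simp add: compactin_subtopology connected_component_subset)
  have lc: "locally_compact_space ?X"
    using P by (intro compact_imp_locally_compact_space) (simp add: compact_space_subtopology)
  have H: "Hausdorff_space ?X" by (simp add: Hausdorff_space_subtopology)
  have oW: "openin ?X (P \<inter> W)" using W(1) by (auto simp: openin_open)
  have "?C \<subseteq> P \<inter> W" using W(2) connected_component_subset by blast
  then obtain U V where UV: "openin ?X U" "openin ?X V" "disjnt U V" "U \<union> V = topspace ?X"
    "?C \<subseteq> U" "U \<subseteq> P \<inter> W"
    by (rule wilder_locally_compact_component_thm[OF lc H C cC oW])
  then have "U = topspace ?X - V" "V = topspace ?X - U" by (auto simp: disjnt_def)
  then have "closedin ?X U" "closedin ?X V" using UV(1,2) by (metis closedin_diff closedin_topspace)+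
  have UVP: "U \<union> V = P" using UV(4) by simp
  have "compact U" "compact V"
    using \<open>closedin ?X U\<close> \<open>closedin ?X V\<close> P compact_imp_closed closedin_closed_trans compact_Int_closed UVP
    by (metis inf.absorb2 sup_ge1 sup_ge2)+
  then obtain O1 O2 where O: "open O1" "open O2" "U \<subseteq> O1" "V \<subseteq> O2" "O1 \<inter> O2 = {}"
    using Hausdorff_space_compact_separation[of euclidean U V] UV(3)
    by (metis Hausdorff_space_euclidean compactin_euclidean_iff disjnt_def open_openin)
  have "x \<in> U" using UV(5) \<open>x \<in> P\<close> by auto
  show thesis
  proof (rule that[of "O1 \<inter> W" O2])
    show "P \<subseteq> O1 \<inter> W \<union> O2" using O(3,4) UVP UV(6) by blast
  qed (use O W(1) \<open>x \<in> U\<close> UV(6) in auto)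
qed

lemma eventually_level_set_subset:
  fixes f :: "'a::metric_space \<Rightarrow> 'b::metric_space" and g :: "'a \<Rightarrow> 'c::metric_space"
  assumes f: "perfect_map f" and g: "continuous_on UNIV g"
    and ys: "ys \<longlonglongrightarrow> y" and xs: "xs \<longlonglongrightarrow> x" and fxs: "\<And>k. f (xs k) = ys k"
    and approx: "\<And>e. e > 0 \<Longrightarrow> \<forall>\<^sub>F k in sequentially. \<forall>w\<in>f -` {ys k}. dist (G k w) (g w) < e"
    and U: "open U" "f -` {y} \<inter> g -` {g x} \<subseteq> U"
  shows "\<forall>\<^sub>F k in sequentially. G k -` {G k (xs k)} \<inter> f -` {ys k} \<subseteq> U"
proof -
  have fc: "continuous_on UNIV f" using f by (simp add: perfect_map_def)
  define S where "S = f -` insert y (range ys)"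
  have "compact S"
    unfolding S_def by (rule perfect_map_compact_vimage[OF f compact_convergent_sequence_range[OF ys]])
  define h where "h w = max (dist (f w) y) (dist (g w) (g x))" for w
  have "continuous_on S h"
    unfolding h_def by (intro continuous_intros continuous_on_subset[OF fc] continuous_on_subset[OF g]) auto
  moreover have "{w \<in> S. h w \<le> 0} \<subseteq> U"
    using U(2) by (auto simp: h_def)
  ultimately obtain \<theta> where \<theta>: "\<theta> > 0" "{w \<in> S. h w < \<theta>} \<subseteq> U"
    using \<open>compact S\<close> U(1) by (elim compact_sublevel_set_subset_open)
  have "\<theta> / 3 > 0" using \<theta>(1) by simp
  have "\<forall>\<^sub>F k in sequentially. dist (ys k) y < \<theta>"
    using tendstoD[OF ys \<theta>(1)] .
  moreover have "\<forall>\<^sub>F k in sequentially. dist (g (xs k)) (g x) < \<theta> / 3"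
    using tendstoD[OF continuous_on_tendsto_compose[OF g xs] \<open>\<theta> / 3 > 0\<close>] by simp
  moreover have "\<forall>\<^sub>F k in sequentially. \<forall>w\<in>f -` {ys k}. dist (G k w) (g w) < \<theta> / 3"
    using approx[OF \<open>\<theta> / 3 > 0\<close>] .
  ultimately show ?thesis
  proof eventually_elim
    case (elim k)
    show ?case
    proof
      fix w assume "w \<in> G k -` {G k (xs k)} \<inter> f -` {ys k}"
      then have "w \<in> S" "f w = ys k" "G k w = G k (xs k)" by (auto simp: S_def)
      have "dist (g w) (g x) \<le> dist (g w) (G k w) + dist (G k (xs k)) (g x)"
        using dist_triangle[of "g w" "g x" "G k w"] \<open>G k w = G k (xs k)\<close> by simp
      also have "\<dots> \<le> dist (g w) (G k w) + dist (G k (xs k)) (g (xs k)) + dist (g (xs k)) (g x)"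
        using dist_triangle[of "G k (xs k)" "g x" "g (xs k)"] by simp
      also have "\<dots> < \<theta>"
      proof -
        have "dist (g w) (G k w) < \<theta> / 3" "dist (G k (xs k)) (g (xs k)) < \<theta> / 3"
          using elim(3) \<open>f w = ys k\<close> fxs[of k] by (auto simp: dist_commute)
        then show ?thesis using elim(2) by linarith
      qed
      finally have "h w < \<theta>" using \<open>f w = ys k\<close> elim(1) by (simp add: h_def)
      then show "w \<in> U" using \<theta>(2) \<open>w \<in> S\<close> by blast
    qed
  qed
qed

lemma eventually_fib_comp_subset:
  fixes f :: "'a::metric_space \<Rightarrow> 'b::metric_space" and g :: "'a \<Rightarrow> 'c::metric_space"
  assumes f: "perfect_map f" and g: "continuous_on UNIV g"
    and ys: "ys \<longlonglongrightarrow> y" and xs: "xs \<longlonglongrightarrow> x" and fxs: "\<And>k. f (xs k) = ys k" and fx: "f x = y"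
    and approx: "\<And>e. e > 0 \<Longrightarrow> \<forall>\<^sub>F k in sequentially. \<forall>w\<in>f -` {ys k}. dist (G k w) (g w) < e"
    and W: "open W" "fib_comp g f y x \<subseteq> W"
  shows "\<forall>\<^sub>F k in sequentially. fib_comp (G k) f (ys k) (xs k) \<subseteq> W"
proof -
  define P where "P = f -` {y} \<inter> g -` {g x}"
  have "compact P"
    unfolding P_def using f closed_vimage[OF closed_singleton g]
    by (simp add: perfect_map_def compact_Int_closed)
  moreover have "x \<in> P" using fx by (simp add: P_def)
  moreover have "connected_component_set P x \<subseteq> W"
    using W(2) by (simp add: fib_comp_def P_def Int_commute)
  ultimately obtain O1 O2 where O: "open O1" "open O2" "O1 \<inter> O2 = {}" "P \<subseteq> O1 \<union> O2"
    "x \<in> O1" "O1 \<subseteq> W"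
    using W(1) by (elim compact_connected_component_open_separation)
  have "\<forall>\<^sub>F k in sequentially. G k -` {G k (xs k)} \<inter> f -` {ys k} \<subseteq> O1 \<union> O2"
    using f g ys xs fxs approx open_Un[OF O(1,2)] O(4)[unfolded P_def]
    by (rule eventually_level_set_subset)
  moreover have "\<forall>\<^sub>F k in sequentially. xs k \<in> O1"
    using topological_tendstoD[OF xs O(1,5)] .
  ultimately show ?thesis
  proof eventually_elim
    case (elim k)
    let ?Pk = "G k -` {G k (xs k)} \<inter> f -` {ys k}"
    have "connected_component_set ?Pk (xs k) \<subseteq> O1"
    proof (rule connected_subset_open_Un[OF connected_connected_component O(1-3)])
      show "connected_component_set ?Pk (xs k) \<subseteq> O1 \<union> O2"
        using elim(1) connected_component_subset[of ?Pk "xs k"] by blast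
      have "xs k \<in> connected_component_set ?Pk (xs k)" using fxs[of k] by simp
      then show "connected_component_set ?Pk (xs k) \<inter> O1 \<noteq> {}" using elim(2) by blast
    qed
    then show ?case using O(6) unfolding fib_comp_def by (rule subset_trans)
  qed
qed

section \<open>Stability of the class K\<close>

lemma K_class_Hausdorff_lim_point:
  fixes f :: "'a::metric_space \<Rightarrow> 'b::metric_space" and g :: "'a \<Rightarrow> 'c::metric_space"
  assumes f: "perfect_map f" and g: "g \<in> K_class f m n y" and ys: "ys \<longlonglongrightarrow> y"
    and approx: "\<And>e. e > 0 \<Longrightarrow> \<forall>\<^sub>F k in sequentially. \<forall>w\<in>f -` {ys k}. dist (G k w) (g w) < e"
    and fib: "\<And>k. \<Lambda> k \<subseteq> f -` {ys k}" and ne: "\<And>k. \<Lambda> k \<noteq> {}" and con: "\<And>k. connected (\<Lambda> k)"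
    and diam: "\<And>k. 1 / real n \<le> diameter (G k ` \<Lambda> k)"
    and lim: "Hausdorff_lim \<Lambda> L" and L: "compact L" "L \<noteq> {}"
  obtains x where "x \<in> L" "f x = y" "fib_comp g f y x \<subseteq> nbhd_set L (1 / real m)"
proof -
  have fc: "continuous_on UNIV f" using f by (simp add: perfect_map_def)
  have gc: "continuous_on UNIV g" using g by (simp add: K_class_def)
  define S where "S = f -` insert y (range ys)"
  have "compact S"
    unfolding S_def by (rule perfect_map_compact_vimage[OF f compact_convergent_sequence_range[OF ys]])
  have LF: "L \<subseteq> f -` {y}" using fc ys fib ne lim by (rule Hausdorff_lim_subset_fibre)
  have "connected L" using lim L(1) con ne by (rule Hausdorff_lim_connected)
  have "1 / real n \<le> diameter (g ` L)"
  proof (rule diameter_image_Hausdorff_lim[OF \<open>compact S\<close> _ _ ne L continuous_on_subset[OF gc] lim _ diam])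
    show "\<Lambda> k \<subseteq> S" for k using fib by (auto simp: S_def)
    show "L \<subseteq> S" using LF by (auto simp: S_def)
    show "\<forall>\<^sub>F k in sequentially. \<forall>w\<in>\<Lambda> k. dist (G k w) (g w) < e" if "e > 0" for e
      using approx[OF that] by (rule eventually_mono) (use fib in blast)
  qed (rule subset_UNIV)
  moreover have "\<forall>L. L \<subseteq> f -` {y} \<and> L \<noteq> {} \<and> compact L \<and> connected L \<and> 1 / real n \<le> diameter (g ` L)
      \<longrightarrow> (\<exists>x\<in>L. fib_comp g f y x \<subseteq> nbhd_set L (1 / real m))"
    using g by (simp add: K_class_def)
  ultimately obtain x where x: "x \<in> L" "fib_comp g f y x \<subseteq> nbhd_set L (1 / real m)"
    using LF L \<open>connected L\<close> by blast
  have "f x = y" using x(1) LF by blast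
  with x show thesis by (intro that)
qed

lemma K_class_Hausdorff_lim:
  fixes f :: "'a::metric_space \<Rightarrow> 'b::metric_space" and g :: "'a \<Rightarrow> 'c::metric_space"
  assumes f: "perfect_map f" and g: "g \<in> K_class f m n y" and ys: "ys \<longlonglongrightarrow> y"
    and approx: "\<And>e. e > 0 \<Longrightarrow> \<forall>\<^sub>F k in sequentially. \<forall>w\<in>f -` {ys k}. dist (G k w) (g w) < e"
    and fib: "\<And>k. \<Lambda> k \<subseteq> f -` {ys k}" and ne: "\<And>k. \<Lambda> k \<noteq> {}" and con: "\<And>k. connected (\<Lambda> k)"
    and diam: "\<And>k. 1 / real n \<le> diameter (G k ` \<Lambda> k)"
    and lim: "Hausdorff_lim \<Lambda> L" and L: "compact L" "L \<noteq> {}"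
  shows "\<forall>\<^sub>F k in sequentially. \<exists>x\<in>\<Lambda> k. fib_comp (G k) f (ys k) x \<subseteq> nbhd_set (\<Lambda> k) (1 / real m)"
proof -
  have gc: "continuous_on UNIV g" using g by (simp add: K_class_def)
  obtain x where x: "x \<in> L" "f x = y" and Cx: "fib_comp g f y x \<subseteq> nbhd_set L (1 / real m)"
    using f g ys approx fib ne con diam lim L by (rule K_class_Hausdorff_lim_point)
  have "compact (f -` {y} \<inter> g -` {g x})"
    using f closed_vimage[OF closed_singleton gc] by (simp add: perfect_map_def compact_Int_closed)
  then have "compact (fib_comp g f y x)"
    unfolding fib_comp_def Int_commute[of "g -` _"] by (rule compact_connected_component)
  then obtain \<eta> where \<eta>: "\<eta> > 0" "fib_comp g f y x \<subseteq> nbhd_set L (1 / real m - \<eta>)"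
    using Cx by (elim compact_subset_nbhd_set_margin)
  obtain xs where xs: "\<And>k. xs k \<in> \<Lambda> k" "xs \<longlonglongrightarrow> x"
    using Hausdorff_lim_approximating_sequence[OF lim ne x(1)] by metis
  have "\<forall>\<^sub>F k in sequentially. fib_comp (G k) f (ys k) (xs k) \<subseteq> nbhd_set L (1 / real m - \<eta>)"
    by (rule eventually_fib_comp_subset[OF f gc ys xs(2) _ x(2) approx open_nbhd_set \<eta>(2)])
      (use xs(1) fib in auto)
  moreover have "\<forall>\<^sub>F k in sequentially. L \<subseteq> nbhd_set (\<Lambda> k) \<eta>"
    using Hausdorff_limD[OF lim \<eta>(1)] by (simp add: eventually_conj_iff)
  ultimately show ?thesis
  proof eventually_elim
    case (elim k)
    have "nbhd_set L (1 / real m - \<eta>) \<subseteq> nbhd_set (\<Lambda> k) (1 / real m - \<eta> + \<eta>)"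
      using elim(2) L(2) by (rule nbhd_set_trans)
    then have "fib_comp (G k) f (ys k) (xs k) \<subseteq> nbhd_set (\<Lambda> k) (1 / real m)"
      using elim(1) by simp
    then show ?case using xs(1)[of k] by blast
  qed
qed

lemma K_class_sequentially:
  fixes f :: "'a::metric_space \<Rightarrow> 'b::metric_space" and g :: "'a \<Rightarrow> 'c::metric_space"
  assumes f: "perfect_map f" and g: "g \<in> K_class f m n y" and ys: "ys \<longlonglongrightarrow> y"
    and G: "\<And>k. continuous_on UNIV (G k)"
    and approx: "\<And>e. e > 0 \<Longrightarrow> \<forall>\<^sub>F k in sequentially. \<forall>w\<in>f -` {ys k}. dist (G k w) (g w) < e"
  shows "\<forall>\<^sub>F k in sequentially. G k \<in> K_class f m n (ys k)"
proof (rule ccontr)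
  assume "\<not> ?thesis"
  then have "infinite {k. G k \<notin> K_class f m n (ys k)}"
    by (simp add: eventually_cofinite flip: cofinite_eq_sequentially)
  then obtain r :: "nat \<Rightarrow> nat" where r: "strict_mono r" "\<And>k. G (r k) \<notin> K_class f m n (ys (r k))"
    using infinite_enumerate by force
  have "\<forall>k. \<exists>\<Lambda>. \<Lambda> \<subseteq> f -` {ys (r k)} \<and> \<Lambda> \<noteq> {} \<and> compact \<Lambda> \<and> connected \<Lambda>
      \<and> 1 / real n \<le> diameter (G (r k) ` \<Lambda>)
      \<and> (\<forall>x\<in>\<Lambda>. \<not> fib_comp (G (r k)) f (ys (r k)) x \<subseteq> nbhd_set \<Lambda> (1 / real m))"
    using r(2) G by (auto simp: K_class_def)
  then obtain \<Lambda> where "\<forall>k. \<Lambda> k \<subseteq> f -` {ys (r k)} \<and> \<Lambda> k \<noteq> {} \<and> compact (\<Lambda> k) \<and> connected (\<Lambda> k)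
      \<and> 1 / real n \<le> diameter (G (r k) ` \<Lambda> k)
      \<and> (\<forall>x\<in>\<Lambda> k. \<not> fib_comp (G (r k)) f (ys (r k)) x \<subseteq> nbhd_set (\<Lambda> k) (1 / real m))"
    by (rule choice[THEN exE])
  then have \<Lambda>: "\<And>k. \<Lambda> k \<subseteq> f -` {ys (r k)}" "\<And>k. \<Lambda> k \<noteq> {}" "\<And>k. connected (\<Lambda> k)"
    "\<And>k. 1 / real n \<le> diameter (G (r k) ` \<Lambda> k)"
    and bad: "\<And>k x. x \<in> \<Lambda> k \<Longrightarrow> \<not> fib_comp (G (r k)) f (ys (r k)) x \<subseteq> nbhd_set (\<Lambda> k) (1 / real m)"
    by auto
  have S: "compact (f -` insert y (range ys))"
    by (rule perfect_map_compact_vimage[OF f compact_convergent_sequence_range[OF ys]])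
  have sub: "\<Lambda> k \<subseteq> f -` insert y (range ys)" for k using \<Lambda>(1) by auto
  obtain s L where s: "strict_mono s" and L: "compact L" "L \<noteq> {}"
    and lim: "Hausdorff_lim (\<lambda>k. \<Lambda> (s k)) L"
    by (rule compact_Hausdorff_convergent_subseq[OF S sub \<Lambda>(2)])
  have "\<forall>\<^sub>F k in sequentially. \<exists>x\<in>\<Lambda> (s k).
      fib_comp (G (r (s k))) f (ys (r (s k))) x \<subseteq> nbhd_set (\<Lambda> (s k)) (1 / real m)"
  proof (rule K_class_Hausdorff_lim[OF f g _ _ _ _ _ _ lim L])
    show "(\<lambda>k. ys (r (s k))) \<longlonglongrightarrow> y"
      using LIMSEQ_subseq_LIMSEQ[OF ys strict_mono_o[OF r(1) s]] by (simp add: o_def)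
    show "\<forall>\<^sub>F k in sequentially. \<forall>w\<in>f -` {ys (r (s k))}. dist (G (r (s k)) w) (g w) < e"
      if "e > 0" for e
      using eventually_subseq[OF strict_mono_o[OF r(1) s] approx[OF that]] by simp
  qed (use \<Lambda> in auto)
  then obtain k x where "x \<in> \<Lambda> (s k)"
    "fib_comp (G (r (s k))) f (ys (r (s k))) x \<subseteq> nbhd_set (\<Lambda> (s k)) (1 / real m)"
    using eventually_happens'[OF sequentially_bot] by blast
  then show False using bad by blast
qed

lemma LIMSEQ_dist_less_inverse_Suc:
  assumes "\<And>k. dist y (ys k) < inverse (real (Suc k))"
  shows "ys \<longlonglongrightarrow> y"
proof -
  have "(\<lambda>k. dist (ys k) y) \<longlonglongrightarrow> 0"
  proof (rule tendsto_sandwich[OF _ _ tendsto_const LIMSEQ_inverse_real_of_nat])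
    show "\<forall>\<^sub>F k in sequentially. 0 \<le> dist (ys k) y" by simp
    show "\<forall>\<^sub>F k in sequentially. dist (ys k) y \<le> inverse (real (Suc k))"
      using assms by (simp add: dist_commute less_imp_le)
  qed
  then show ?thesis by (rule tendsto_dist_iff[THEN iffD2])
qed

lemma fibrewise_neighbourhood_sequentially:
  fixes f :: "'a::topological_space \<Rightarrow> 'b::metric_space" and g :: "'a \<Rightarrow> 'c::metric_space"
  assumes seq: "\<And>ys G. ys \<longlonglongrightarrow> y \<Longrightarrow> (\<And>k. continuous_on UNIV (G k)) \<Longrightarrow>
      (\<And>e. e > 0 \<Longrightarrow> \<forall>\<^sub>F k in sequentially. \<forall>x\<in>f -` {ys k}. dist (G k x) (g x) < e) \<Longrightarrow>
      \<exists>k. P (ys k) (G k)"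
  shows "\<exists>V \<delta>. open V \<and> y \<in> V \<and> \<delta> > 0 \<and>
           (\<forall>y'\<in>V. \<forall>g1. continuous_on UNIV g1 \<and> (\<forall>x\<in>f -` {y'}. dist (g1 x) (g x) < \<delta>) \<longrightarrow> P y' g1)"
proof (rule ccontr)
  assume neg: "\<not> ?thesis"
  have "\<exists>y' G. dist y y' < \<delta> \<and> continuous_on UNIV G
      \<and> (\<forall>x\<in>f -` {y'}. dist (G x) (g x) < \<delta>) \<and> \<not> P y' G" if "\<delta> > 0" for \<delta>
  proof (rule ccontr)
    assume none: "\<not> ?thesis"
    have "\<forall>y'\<in>ball y \<delta>. \<forall>g1. continuous_on UNIV g1 \<and>
        (\<forall>x\<in>f -` {y'}. dist (g1 x) (g x) < \<delta>) \<longrightarrow> P y' g1"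
    proof (intro ballI allI impI)
      fix y' g1
      assume "y' \<in> ball y \<delta>" "continuous_on UNIV g1 \<and> (\<forall>x\<in>f -` {y'}. dist (g1 x) (g x) < \<delta>)"
      then show "P y' g1" using none by (simp only: mem_ball) blast
    qed
    then show False using neg that open_ball centre_in_ball by blast
  qed
  then have "\<forall>k. \<exists>y' G. dist y y' < inverse (real (Suc k)) \<and> continuous_on UNIV G
      \<and> (\<forall>x\<in>f -` {y'}. dist (G x) (g x) < inverse (real (Suc k))) \<and> \<not> P y' G"
    by simp
  then obtain ys where "\<forall>k. \<exists>G. dist y (ys k) < inverse (real (Suc k)) \<and> continuous_on UNIV G
      \<and> (\<forall>x\<in>f -` {ys k}. dist (G x) (g x) < inverse (real (Suc k))) \<and> \<not> P (ys k) G"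
    by (rule choice[THEN exE])
  then obtain G where "\<forall>k. dist y (ys k) < inverse (real (Suc k)) \<and> continuous_on UNIV (G k)
      \<and> (\<forall>x\<in>f -` {ys k}. dist (G k x) (g x) < inverse (real (Suc k))) \<and> \<not> P (ys k) (G k)"
    by (rule choice[THEN exE])
  then have ys: "\<And>k. dist y (ys k) < inverse (real (Suc k))"
    and G: "\<And>k. continuous_on UNIV (G k)"
    and close: "\<And>k x. f x = ys k \<Longrightarrow> dist (G k x) (g x) < inverse (real (Suc k))"
    and bad: "\<And>k. \<not> P (ys k) (G k)"
    by auto
  have "ys \<longlonglongrightarrow> y" using ys by (rule LIMSEQ_dist_less_inverse_Suc)
  moreover have "\<forall>\<^sub>F k in sequentially. \<forall>x\<in>f -` {ys k}. dist (G k x) (g x) < e" if "e > 0" for e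
    using tendstoD[OF LIMSEQ_inverse_real_of_nat that]
  proof (rule eventually_mono)
    fix k assume "dist (inverse (real (Suc k))) 0 < e"
    then have "inverse (real (Suc k)) < e" by simp
    then show "\<forall>x\<in>f -` {ys k}. dist (G k x) (g x) < e"
      using close[of _ k] by (auto intro: less_trans)
  qed
  ultimately have "\<exists>k. P (ys k) (G k)" by (rule seq[OF _ G])
  then show False using bad by blast
qed

theorem lemma2p3:
  fixes f :: "'a::metric_space \<Rightarrow> 'b::metric_space"
    and g :: "'a \<Rightarrow> 'c::complete_space"
    and m n :: nat and y :: 'b
  assumes "perfect_map f" and "m \<ge> 1" and "n \<ge> 1"
    and "g \<in> K_class f m n y"
  shows "\<exists>V \<delta>. open V \<and> y \<in> V \<and> \<delta> > 0 \<and>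
           (\<forall>y'\<in>V. \<forall>g1 :: 'a \<Rightarrow> 'c. continuous_on UNIV g1 \<and>
                (\<forall>x\<in>f -` {y'}. dist (g1 x) (g x) < \<delta>) \<longrightarrow> g1 \<in> K_class f m n y')"
proof (rule fibrewise_neighbourhood_sequentially)
  fix ys and G :: "nat \<Rightarrow> 'a \<Rightarrow> 'c"
  assume ys: "ys \<longlonglongrightarrow> y" and G: "\<And>k. continuous_on UNIV (G k)"
    and approx: "\<And>e. e > 0 \<Longrightarrow> \<forall>\<^sub>F k in sequentially. \<forall>x\<in>f -` {ys k}. dist (G k x) (g x) < e"
  have "\<forall>\<^sub>F k in sequentially. G k \<in> K_class f m n (ys k)"
    by (rule K_class_sequentially[OF assms(1,4) ys G approx])
  then show "\<exists>k. G k \<in> K_class f m n (ys k)"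
    using eventually_happens'[OF sequentially_bot] by blast
qed

end
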